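(* Suppose $q\in(0,\infty)$, $p\in(0,q]$ and $s\in\mathbb{R}$. Then for any $c_0>0$, $c_1>1$, there is a continuous embedding $Z^{p,q}_s(\mathbb{R}^n;c_0,c_1)\hookrightarrow T^{p,q}_s(\mathbb{R}^n)$.
   Context: $\mathbb{R}^n$ with Euclidean distance and Lebesgue measure, $V(x,t)=|B(x,t)|$; $\mathbb{R}^{n+1}_+:=\mathbb{R}^n\times(0,\infty)$ with measure $dy\,dt/t$. $\Gamma(x):=\{(y,t):|x-y|<t\}$; $\mathcal{A}^qf(x):=(\iint_{\Gamma(x)}|f|^q\frac{dy}{V(y,t)}\frac{dt}{t})^{1/q}$; $(V^sf)(y,t):=V(y,t)^sf(y,t)$; $\|f\|_{T^{p,q}_s(\mathbb{R}^n)}:=\|\mathcal{A}^q(V^{-s}f)\|_{L^p(\mathbb{R}^n)}$. $\Omega_{c_0,c_1}(x,t):=B(x,c_0t)\times(t/c_1,c_1t)$; $\mathcal{W}^q_{c_0,c_1}f(x,t):=(\text{average of }|f(\xi,\tau)|^q\text{ over }\Omega_{c_0,c_1}(x,t)\text{ w.r.t. }d\xi\,d\tau)^{1/q}$; $\|f\|_{Z^{p,q}_s(\mathbb{R}^n;c_0,c_1)}:=\|\mathcal{W}^q_{c_0,c_1}(V^{-s}f)\|_{L^p(\mathbb{R}^{n+1}_+,dx\,dt/t)}$. *)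

theory Defs
  imports "HOL-Analysis.Analysis"
begin

text \<open>Real power on [0,\<infinity>], with \<infinity> mapped to \<infinity> (used for positive exponents only).\<close>
definition epow :: "ennreal \<Rightarrow> real \<Rightarrow> ennreal" where
  "epow x r = (if x = \<infinity> then \<infinity> else ennreal (enn2real x powr r))"

definition Vol :: "'a::euclidean_space \<Rightarrow> real \<Rightarrow> real" where
  "Vol x t = measure lborel (ball x t)"

definition Vpow :: "real \<Rightarrow> ('a::euclidean_space \<times> real \<Rightarrow> real) \<Rightarrow> 'a \<times> real \<Rightarrow> real" where
  "Vpow s f = (\<lambda>(y,t). Vol y t powr s * f (y,t))"

definition cone :: "'a::euclidean_space \<Rightarrow> ('a \<times> real) set" where
  "cone x = {(y,t). dist x y < t}"

definition Aq :: "real \<Rightarrow> ('a::euclidean_space \<times> real \<Rightarrow> real) \<Rightarrow> 'a \<Rightarrow> ennreal" where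
  "Aq q f x = epow (\<integral>\<^sup>+ (y,t). indicator (cone x) (y,t) *
        ennreal (\<bar>f (y,t)\<bar> powr q / Vol y t / t) \<partial>(lborel \<Otimes>\<^sub>M lborel)) (1/q)"

definition T_norm :: "real \<Rightarrow> real \<Rightarrow> real \<Rightarrow> ('a::euclidean_space \<times> real \<Rightarrow> real) \<Rightarrow> ennreal" where
  "T_norm p q s f = epow (\<integral>\<^sup>+ x. epow (Aq q (Vpow (-s) f) x) p \<partial>lborel) (1/p)"

definition Whitney_region :: "real \<Rightarrow> real \<Rightarrow> 'a::euclidean_space \<Rightarrow> real \<Rightarrow> ('a \<times> real) set" where
  "Whitney_region c0 c1 x t = ball x (c0 * t) \<times> {t / c1 <..< c1 * t}"

definition Wq :: "real \<Rightarrow> real \<Rightarrow> real \<Rightarrow> ('a::euclidean_space \<times> real \<Rightarrow> real) \<Rightarrow> 'a \<times> real \<Rightarrow> ennreal" where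
  "Wq c0 c1 q f = (\<lambda>(x,t). epow
      ((\<integral>\<^sup>+ z. indicator (Whitney_region c0 c1 x t) z * ennreal (\<bar>f z\<bar> powr q) \<partial>(lborel \<Otimes>\<^sub>M lborel))
        / emeasure (lborel \<Otimes>\<^sub>M lborel) (Whitney_region c0 c1 x t)) (1/q))"

definition Z_norm :: "real \<Rightarrow> real \<Rightarrow> real \<Rightarrow> real \<Rightarrow> real \<Rightarrow> ('a::euclidean_space \<times> real \<Rightarrow> real) \<Rightarrow> ennreal" where
  "Z_norm p q s c0 c1 f = epow (\<integral>\<^sup>+ (x,t). indicator {(x::'a,t). 0 < t} (x,t) *
        epow (Wq c0 c1 q (Vpow (-s) f) (x,t)) p * ennreal (1/t) \<partial>(lborel \<Otimes>\<^sub>M lborel)) (1/p)"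

end

theory Submission
  imports Defs "HOL-Library.Nat_Bijection"
begin

text \<open>
  Put G = |V^(-s) f|^q, r = p/q \<le> 1 and a = sqrt c1. Slice the cone \<Gamma>(x) into the layers
  a^k \<le> t < a^(k+1), and cover the slice at height l = a^k by the cylinders
  B(x + l v, l c0/2) \<times> [l, a l), v \<in> P, where the balls B(v, c0/2), v \<in> P, form a fixed finite
  cover of the closed ball of radius a. Each cylinder lies in the Whitney region of each of its
  points and has comparable volume, so its normalised G-mass is dominated by the Whitney average
  at any of its points, hence by the dt/t-mean of these averages over the cylinder. As u \<mapsto> u^r
  is subadditive, the r-th power passes through the sums over layers and cylinders. Integrating
  in x sweeps each cylinder over its whole layer, so every point of the upper half-space is
  counted card P times.
\<close>

lemma epow_ennreal: "0 \<le> u \<Longrightarrow> epow (ennreal u) r = ennreal (u powr r)"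
  by (simp add: epow_def)

lemma epow_top [simp]: "epow top r = top"
  by (simp add: epow_def)

lemma epow_zero [simp]: "epow 0 r = 0"
  by (simp add: epow_def)

lemma epow_one [simp]: "epow x 1 = x"
  by (cases x) (auto simp: epow_def)

lemma epow_mono:
  assumes "x \<le> y" "0 \<le> r"
  shows "epow x r \<le> epow y r"
proof (cases "y = top")
  case False
  then have "x \<noteq> \<infinity>" "enn2real x \<le> enn2real y"
    using assms(1) by (auto simp: top_unique enn2real_mono top.not_eq_extremum)
  with False assms(2) show ?thesis
    by (simp add: epow_def powr_mono2)
qed simp

lemma epow_epow: "0 < a \<Longrightarrow> epow (epow x a) b = epow x (a * b)"
  by (cases "x = top") (simp_all add: epow_def powr_powr)

lemma epow_mult_ennreal:
  assumes "0 \<le> c" "0 < r"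
  shows "epow (ennreal c * x) r = ennreal (c powr r) * epow x r"
proof (cases "x = top")
  case True
  with assms show ?thesis
    by (cases "c = 0") (simp_all add: ennreal_mult_top)
next
  case False
  then obtain u where "x = ennreal u" "0 \<le> u"
    by (cases x) auto
  with assms show ?thesis
    by (simp add: epow_ennreal ennreal_mult[symmetric] powr_mult)
qed

lemma powr_add_le_add_powr:
  fixes x y r :: real
  assumes "0 \<le> x" "0 \<le> y" "0 < r" "r \<le> 1"
  shows "(x + y) powr r \<le> x powr r + y powr r"
proof (cases "x + y = 0")
  case False
  then have s: "0 < x + y"
    using assms by auto
  have le_powr: "u \<le> u powr r" if "0 \<le> u" "u \<le> 1" for u :: real
  proof (cases "u = 0")
    case False
    then have "u powr 1 \<le> u powr r"
      using that assms by (intro powr_mono') auto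
    with False that show ?thesis
      by simp
  qed simp
  have "(x + y) powr r = (x + y) powr r * (x / (x + y) + y / (x + y))"
    using s by (simp add: add_divide_distrib[symmetric])
  also have "\<dots> \<le> (x + y) powr r * ((x / (x + y)) powr r + (y / (x + y)) powr r)"
    using s assms by (intro mult_left_mono add_mono le_powr) auto
  also have "\<dots> = x powr r + y powr r"
    using s assms by (simp add: powr_divide distrib_left)
  finally show ?thesis .
qed (use assms in auto)

lemma epow_add_le:
  assumes "0 < r" "r \<le> 1"
  shows "epow (x + y) r \<le> epow x r + epow y r"
proof (cases "x = top \<or> y = top")
  case False
  then obtain u v where "x = ennreal u" "y = ennreal v" "0 \<le> u" "0 \<le> v"
    by (cases x; cases y) auto
  with assms show ?thesis
    by (simp add: epow_ennreal ennreal_plus[symmetric] powr_add_le_add_powr del: ennreal_plus)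
qed auto

lemma epow_sum_le:
  assumes "0 < r" "r \<le> 1"
  shows "epow (\<Sum>i\<in>I. f i) r \<le> (\<Sum>i\<in>I. epow (f i) r)"
proof (induction I rule: infinite_finite_induct)
  case (insert i I)
  have "epow (f i + (\<Sum>i\<in>I. f i)) r \<le> epow (f i) r + epow (\<Sum>i\<in>I. f i) r"
    by (rule epow_add_le[OF assms])
  also have "\<dots> \<le> epow (f i) r + (\<Sum>i\<in>I. epow (f i) r)"
    using insert by (intro add_left_mono)
  finally show ?case
    using insert by simp
qed (simp_all add: epow_def)

lemma epow_suminf_le:
  assumes "0 < r" "r \<le> 1"
  shows "epow (\<Sum>i. f i) r \<le> (\<Sum>i. epow (f i) r)"
proof -
  define L where "L = (\<Sum>i. epow (f i) r)"
  have "sum f {..<N} \<le> epow L (1 / r)" for N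
  proof -
    have "epow (sum f {..<N}) r \<le> L"
      using epow_sum_le[OF assms, of f "{..<N}"] unfolding L_def
      by (meson order_trans sum_le_suminf summableI zero_le finite_lessThan)
    then have "epow (epow (sum f {..<N}) r) (1 / r) \<le> epow L (1 / r)"
      using assms by (intro epow_mono) auto
    then show ?thesis
      using assms by (simp add: epow_epow)
  qed
  then have "(\<Sum>i. f i) \<le> epow L (1 / r)"
    by (simp add: suminf_eq_SUP SUP_least)
  then have "epow (\<Sum>i. f i) r \<le> epow (epow L (1 / r)) r"
    using assms by (intro epow_mono) auto
  then show ?thesis
    using assms by (simp add: epow_epow L_def)
qed

lemma epow_measurable [measurable]:
  assumes [measurable]: "f \<in> borel_measurable M"
  shows "(\<lambda>x. epow (f x) r) \<in> borel_measurable M"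
  unfolding epow_def by measurable

lemma le_ennreal_inverse_mult:
  assumes "0 < k" "c * ennreal k \<le> X"
  shows "c \<le> ennreal (1 / k) * X"
proof -
  have "c = c * ennreal k * ennreal (1 / k)"
    using assms(1) by (simp add: mult.assoc ennreal_mult[symmetric])
  also have "\<dots> \<le> X * ennreal (1 / k)"
    using assms(2) by (rule mult_right_mono) simp
  finally show ?thesis
    by (simp add: mult.commute)
qed

lemma nn_integral_indicator_le_sum_cover:
  assumes "finite P" "A \<subseteq> (\<Union>v\<in>P. B v)" "\<And>v. B v \<in> sets M" "f \<in> borel_measurable M"
  shows "(\<integral>\<^sup>+ u. indicator A u * f u \<partial>M) \<le> (\<Sum>v\<in>P. \<integral>\<^sup>+ u. indicator (B v) u * f u \<partial>M)"
proof -
  have "indicator A u * f u \<le> (\<Sum>v\<in>P. indicator (B v) u * f u)" for u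
  proof (cases "u \<in> A")
    case True
    then obtain v where "v \<in> P" "u \<in> B v"
      using assms(2) by blast
    then have "indicator (B v) u * f u \<le> (\<Sum>v\<in>P. indicator (B v) u * f u)"
      by (intro member_le_sum assms(1)) auto
    with \<open>u \<in> A\<close> \<open>u \<in> B v\<close> show ?thesis
      by simp
  qed simp
  then have "(\<integral>\<^sup>+ u. indicator A u * f u \<partial>M) \<le> (\<integral>\<^sup>+ u. (\<Sum>v\<in>P. indicator (B v) u * f u) \<partial>M)"
    by (intro nn_integral_mono)
  also have "\<dots> = (\<Sum>v\<in>P. \<integral>\<^sup>+ u. indicator (B v) u * f u \<partial>M)"
    using assms(3,4) by (intro nn_integral_sum) auto
  finally show ?thesis .
qed

text \<open>The layers [a^k, a^(k+1)), k \<in> \<int>, indexed by nat through int_decode so that sums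
  over all layers are series.\<close>

definition layer_base :: "real \<Rightarrow> nat \<Rightarrow> real" where
  "layer_base a m = a powr real_of_int (int_decode m)"

definition layer :: "real \<Rightarrow> nat \<Rightarrow> real set" where
  "layer a m = {layer_base a m ..< a * layer_base a m}"

lemma layer_base_pos: "1 < a \<Longrightarrow> 0 < layer_base a m"
  by (simp add: layer_base_def)

lemma layer_borel [measurable]: "layer a m \<in> sets borel"
  by (simp add: layer_def)

lemma floor_log_layer:
  assumes "1 < a" "t \<in> layer a m"
  shows "\<lfloor>log a t\<rfloor> = int_decode m"
proof -
  define k where "k = int_decode m"
  have t: "a powr k \<le> t" "t < a powr (k + 1)"
    using assms by (auto simp: layer_def layer_base_def k_def powr_add mult.commute)
  moreover have "0 < t"
    using t(1) assms(1) by (smt (verit) powr_gt_zero)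
  ultimately have "k \<le> log a t" "log a t < k + 1"
    using assms(1) by (simp_all add: le_log_iff log_less_iff)
  then show ?thesis
    unfolding k_def by linarith
qed

lemma layer_exists:
  assumes "1 < a" "0 < t"
  shows "\<exists>m. t \<in> layer a m"
proof -
  define k where "k = \<lfloor>log a t\<rfloor>"
  have "a powr k \<le> t" "t < a powr (k + 1)"
    using assms unfolding k_def
    by (simp_all add: le_log_iff[symmetric] log_less_iff[symmetric])
  then have "t \<in> layer a (int_encode k)"
    using assms(1) by (simp add: layer_def layer_base_def powr_add mult.commute)
  then show ?thesis ..
qed

lemma suminf_indicator_layer:
  assumes "1 < a"
  shows "(\<Sum>m. indicator (layer a m) t :: ennreal) = indicator {0<..} t"
proof (cases "0 < t")
  case True
  obtain m0 where m0: "t \<in> layer a m0"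
    using layer_exists[OF assms True] by blast
  have "t \<in> layer a m \<longleftrightarrow> m = m0" for m
    using floor_log_layer[OF assms m0] floor_log_layer[OF assms, of t m] m0
    by (auto simp: int_decode_eq)
  then have "(\<lambda>m. indicator (layer a m) t :: ennreal) = (\<lambda>m. if m = m0 then 1 else 0)"
    by (auto simp: indicator_def)
  with True show ?thesis
    using sums_single[of m0 "\<lambda>_. 1::ennreal"] sums_unique by fastforce
next
  case False
  then have "t \<notin> layer a m" for m
    using layer_base_pos[OF assms, of m] by (auto simp: layer_def)
  with False show ?thesis
    by simp
qed

lemma ball_subset_scaled_cover:
  fixes x :: "'a::real_normed_vector"
  assumes cover: "cball 0 R \<subseteq> (\<Union>v\<in>P. ball v \<delta>)" and "0 < l"
  shows "ball x (l * R) \<subseteq> (\<Union>v\<in>P. ball (x + l *\<^sub>R v) (l * \<delta>))"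
proof
  fix y assume "y \<in> ball x (l * R)"
  define z where "z = (1 / l) *\<^sub>R (y - x)"
  have y: "y = x + l *\<^sub>R z"
    using \<open>0 < l\<close> by (simp add: z_def)
  have "norm z \<le> R"
    using \<open>y \<in> ball x (l * R)\<close> \<open>0 < l\<close>
    by (simp add: y dist_norm pos_divide_le_eq mult.commute)
  then obtain v where "v \<in> P" "dist v z < \<delta>"
    using cover by force
  moreover have "dist (x + l *\<^sub>R v) y = l * dist v z"
    using \<open>0 < l\<close> by (simp add: y dist_norm scaleR_diff_right[symmetric])
  ultimately have "v \<in> P" "dist (x + l *\<^sub>R v) y < l * \<delta>"
    using \<open>0 < l\<close> by simp_all
  then show "y \<in> (\<Union>v\<in>P. ball (x + l *\<^sub>R v) (l * \<delta>))"
    by auto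
qed

lemma cylinder_subset_Whitney_region:
  assumes "1 < a" "a \<le> c1" and w: "w \<in> ball y (l * (c0 / 2)) \<times> {l..<a * l}"
  shows "ball y (l * (c0 / 2)) \<times> {l..<a * l} \<subseteq> Whitney_region c0 c1 (fst w) (snd w)"
proof
  fix u assume u: "u \<in> ball y (l * (c0 / 2)) \<times> {l..<a * l}"
  obtain z \<tau> where w_eq: "w = (z, \<tau>)"
    by (cases w)
  obtain \<xi> t where u_eq: "u = (\<xi>, t)"
    by (cases u)
  have l: "l \<le> \<tau>" "\<tau> < a * l" "l \<le> t" "t < a * l"
    using w u by (auto simp: w_eq u_eq)
  have "0 < (a - 1) * l"
    using l by (simp add: algebra_simps)
  then have "0 < l"
    using assms(1) by (simp add: zero_less_mult_iff)
  have "dist y z < l * (c0 / 2)"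
    using w by (simp add: w_eq)
  then have "0 < l * (c0 / 2)"
    using zero_le_dist[of y z] by linarith
  then have "0 < c0"
    using \<open>0 < l\<close> by (simp add: zero_less_mult_iff)
  have "dist z \<xi> \<le> dist y z + dist y \<xi>"
    by (rule dist_triangle3)
  also have "\<dots> < l * c0"
    using w u by (auto simp: w_eq u_eq)
  also have "\<dots> \<le> c0 * \<tau>"
    using l \<open>0 < c0\<close> by (simp add: mult.commute)
  finally have "dist z \<xi> < c0 * \<tau>" .
  moreover have "a * l \<le> c1 * l" "a * \<tau> \<le> c1 * \<tau>" "c1 * l \<le> c1 * t" "t < a * \<tau>"
    using l \<open>0 < l\<close> assms(1,2) by (auto intro: mult_right_mono order.strict_trans2)
  then have "\<tau> < c1 * t" "t < c1 * \<tau>"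
    using l by linarith+
  ultimately show "u \<in> Whitney_region c0 c1 (fst w) (snd w)"
    using assms(1,2) by (simp add: w_eq u_eq Whitney_region_def divide_less_eq mult.commute)
qed

lemma emeasure_Whitney_region:
  fixes x :: "'a::euclidean_space"
  assumes "0 < c0" "1 \<le> c1" "0 < t"
  shows "emeasure (lborel \<Otimes>\<^sub>M lborel) (Whitney_region c0 c1 x t)
    = ennreal (unit_ball_vol DIM('a) * (c0 * t) ^ DIM('a) * (c1 * t - t / c1))"
proof -
  have "t / c1 \<le> c1 * t"
    using assms by (simp add: divide_le_eq) (smt (verit) mult_le_cancel_right1 mult_pos_pos)
  with assms show ?thesis
    by (simp add: Whitney_region_def lborel.emeasure_pair_measure_Times emeasure_ball
        ennreal_mult'[symmetric] mult.assoc)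
qed

lemma emeasure_cylinder:
  fixes y :: "'a::euclidean_space"
  assumes "0 \<le> \<rho>" "l \<le> b"
  shows "emeasure (lborel \<Otimes>\<^sub>M lborel) (ball y \<rho> \<times> {l..<b})
    = ennreal (unit_ball_vol DIM('a) * \<rho> ^ DIM('a) * (b - l))"
  using assms by (simp add: lborel.emeasure_pair_measure_Times emeasure_ball ennreal_mult'[symmetric])

lemma Whitney_region_sets [measurable]:
  "Whitney_region c0 c1 x t \<in> sets (lborel \<Otimes>\<^sub>M lborel)"
  unfolding Whitney_region_def by (intro pair_measureI) auto

definition Whitney_avg ::
    "real \<Rightarrow> real \<Rightarrow> ('a::euclidean_space \<times> real \<Rightarrow> real) \<Rightarrow> 'a \<times> real \<Rightarrow> ennreal" where
  "Whitney_avg c0 c1 G w =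
     (\<integral>\<^sup>+ z. indicator (Whitney_region c0 c1 (fst w) (snd w)) z * ennreal (G z) \<partial>(lborel \<Otimes>\<^sub>M lborel))
       / emeasure (lborel \<Otimes>\<^sub>M lborel) (Whitney_region c0 c1 (fst w) (snd w))"

lemma Wq_eq_Whitney_avg:
  "Wq c0 c1 q g w = epow (Whitney_avg c0 c1 (\<lambda>z. \<bar>g z\<bar> powr q) w) (1 / q)"
  by (cases w) (simp add: Wq_def Whitney_avg_def)

lemma Whitney_avg_measurable [measurable]:
  fixes G :: "'a::euclidean_space \<times> real \<Rightarrow> real"
  assumes [measurable]: "G \<in> borel_measurable (lborel \<Otimes>\<^sub>M lborel)"
  shows "Whitney_avg c0 c1 G \<in> borel_measurable (lborel \<Otimes>\<^sub>M lborel)"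
proof -
  interpret sigma_finite_measure "lborel \<Otimes>\<^sub>M (lborel :: 'a measure)"
    by (intro sigma_finite_pair_measure sigma_finite_lborel)
  have [measurable]: "Measurable.pred ((lborel \<Otimes>\<^sub>M lborel) \<Otimes>\<^sub>M (lborel \<Otimes>\<^sub>M lborel))
      (\<lambda>(w :: 'a \<times> real, z). z \<in> Whitney_region c0 c1 (fst w) (snd w))"
    unfolding Whitney_region_def by (simp add: case_prod_beta mem_Times_iff) measurable
  have "emeasure (lborel \<Otimes>\<^sub>M lborel) (Whitney_region c0 c1 (fst w) (snd w))
      = (\<integral>\<^sup>+ z. indicator (Whitney_region c0 c1 (fst w) (snd w)) z \<partial>(lborel \<Otimes>\<^sub>M lborel))" for w
    by (intro nn_integral_indicator[symmetric] Whitney_region_sets)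
  then show ?thesis
    unfolding Whitney_avg_def[abs_def] by measurable
qed

lemma
  fixes u :: "'a::euclidean_space"
  assumes "sigma_finite_measure M" and [measurable]: "F \<in> borel_measurable (lborel \<Otimes>\<^sub>M M)"
  shows nn_integral_ball_translate_measurable [measurable]:
      "(\<lambda>x. \<integral>\<^sup>+ w. indicator (ball (x + u) \<rho>) (fst w) * F w \<partial>(lborel \<Otimes>\<^sub>M M)) \<in> borel_measurable lborel"
    and nn_integral_ball_translate:
      "0 \<le> \<rho> \<Longrightarrow> (\<integral>\<^sup>+ x. (\<integral>\<^sup>+ w. indicator (ball (x + u) \<rho>) (fst w) * F w \<partial>(lborel \<Otimes>\<^sub>M M)) \<partial>lborel)
        = ennreal (unit_ball_vol DIM('a) * \<rho> ^ DIM('a)) * (\<integral>\<^sup>+ w. F w \<partial>(lborel \<Otimes>\<^sub>M M))"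
proof -
  interpret M: sigma_finite_measure M by fact
  interpret P: pair_sigma_finite lborel "lborel \<Otimes>\<^sub>M M"
    unfolding pair_sigma_finite_def
    by (intro conjI sigma_finite_lborel sigma_finite_pair_measure assms(1))
  have [measurable]: "Measurable.pred (lborel \<Otimes>\<^sub>M (lborel \<Otimes>\<^sub>M M)) (\<lambda>(x :: 'a, w). fst w \<in> ball (x + u) \<rho>)"
    by (simp add: case_prod_beta mem_ball) measurable
  show "(\<lambda>x. \<integral>\<^sup>+ w. indicator (ball (x + u) \<rho>) (fst w) * F w \<partial>(lborel \<Otimes>\<^sub>M M)) \<in> borel_measurable lborel"
    by measurable
  assume "0 \<le> \<rho>"
  have ball_shift: "indicator (ball (x + u) \<rho>) y = (indicator (ball (y - u) \<rho>) x :: ennreal)" for x y :: 'a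
    by (simp add: indicator_def dist_norm norm_minus_commute algebra_simps)
  have "(\<integral>\<^sup>+ x. (\<integral>\<^sup>+ w. indicator (ball (x + u) \<rho>) (fst w) * F w \<partial>(lborel \<Otimes>\<^sub>M M)) \<partial>lborel)
      = (\<integral>\<^sup>+ w. (\<integral>\<^sup>+ x. indicator (ball (x + u) \<rho>) (fst w) * F w \<partial>lborel) \<partial>(lborel \<Otimes>\<^sub>M M))"
    by (rule P.Fubini'[symmetric]) measurable
  also have "\<dots> = (\<integral>\<^sup>+ w. (\<integral>\<^sup>+ x. F w * indicator (ball (fst w - u) \<rho>) x \<partial>lborel) \<partial>(lborel \<Otimes>\<^sub>M M))"
    by (simp add: ball_shift mult.commute)
  also have "\<dots> = (\<integral>\<^sup>+ w. ennreal (unit_ball_vol DIM('a) * \<rho> ^ DIM('a)) * F w \<partial>(lborel \<Otimes>\<^sub>M M))"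
    using \<open>0 \<le> \<rho>\<close> by (simp add: nn_integral_cmult_indicator emeasure_ball mult.commute)
  also have "\<dots> = ennreal (unit_ball_vol DIM('a) * \<rho> ^ DIM('a)) * (\<integral>\<^sup>+ w. F w \<partial>(lborel \<Otimes>\<^sub>M M))"
    by (rule nn_integral_cmult) measurable
  finally show "(\<integral>\<^sup>+ x. (\<integral>\<^sup>+ w. indicator (ball (x + u) \<rho>) (fst w) * F w \<partial>(lborel \<Otimes>\<^sub>M M)) \<partial>lborel)
      = ennreal (unit_ball_vol DIM('a) * \<rho> ^ DIM('a)) * (\<integral>\<^sup>+ w. F w \<partial>(lborel \<Otimes>\<^sub>M M))" .
qed

lemma cylinder_average_le_Whitney_avg:
  fixes y :: "'a::euclidean_space"
  assumes "0 < c0" "1 < a" "a \<le> c1" "0 < l" and w: "w \<in> ball y (l * (c0 / 2)) \<times> {l..<a * l}"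
  shows "ennreal (1 / (unit_ball_vol DIM('a) * l ^ (DIM('a) + 1))) *
      (\<integral>\<^sup>+ z. indicator (ball y (l * (c0 / 2)) \<times> {l..<a * l}) z * ennreal (G z) \<partial>(lborel \<Otimes>\<^sub>M lborel))
    \<le> ennreal (c0 ^ DIM('a) * a ^ (DIM('a) + 1) * (c1 - 1 / c1)) * Whitney_avg c0 c1 G w"
proof -
  define n where "n = DIM('a)"
  define \<omega> where "\<omega> = unit_ball_vol n"
  define B where "B = c0 ^ n * a ^ (n + 1) * (c1 - 1 / c1)"
  define cyl where "cyl = ball y (l * (c0 / 2)) \<times> {l..<a * l}"
  define \<Omega> where "\<Omega> = Whitney_region c0 c1 (fst w) (snd w)"
  define \<tau> where "\<tau> = snd w"
  define d where "d = \<omega> * c0 ^ n * (c1 - 1 / c1) * \<tau> ^ (n + 1)"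
  have \<tau>: "l \<le> \<tau>" "\<tau> < a * l"
    using w by (auto simp: \<tau>_def)
  have "1 / c1 < 1"
    using assms(2,3) by simp
  then have "0 < c1 - 1 / c1"
    using assms(2,3) by linarith
  have "0 < \<omega>"
    by (simp add: \<omega>_def)
  have "0 < d" "0 \<le> B"
    using \<tau> assms \<open>0 < \<omega>\<close> \<open>0 < c1 - 1 / c1\<close> by (simp_all add: d_def B_def)
  have "emeasure (lborel \<Otimes>\<^sub>M lborel) \<Omega> = ennreal d"
    using emeasure_Whitney_region[of c0 c1 \<tau> "fst w"] \<tau> assms
    by (simp add: \<Omega>_def \<tau>_def d_def \<omega>_def n_def power_mult_distrib field_simps)
  then have avg: "Whitney_avg c0 c1 G w
      = (\<integral>\<^sup>+ z. indicator \<Omega> z * ennreal (G z) \<partial>(lborel \<Otimes>\<^sub>M lborel)) * ennreal (1 / d)"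
    using \<open>0 < d\<close>
    by (simp add: Whitney_avg_def \<Omega>_def divide_ennreal_def inverse_ennreal divide_inverse)
  have "d \<le> \<omega> * c0 ^ n * (c1 - 1 / c1) * (a * l) ^ (n + 1)"
    unfolding d_def using \<tau> assms \<open>0 < \<omega>\<close> \<open>0 < c1 - 1 / c1\<close>
    by (intro mult_left_mono power_mono) auto
  also have "\<dots> = B * (\<omega> * l ^ (n + 1))"
    by (simp add: B_def power_mult_distrib)
  finally have "1 / (\<omega> * l ^ (n + 1)) \<le> B * (1 / d)"
    using \<open>0 < d\<close> \<open>0 < \<omega>\<close> assms(4) by (simp add: field_simps)
  moreover have "cyl \<subseteq> \<Omega>"
    unfolding cyl_def \<Omega>_def using assms(2,3) w by (rule cylinder_subset_Whitney_region)
  then have "(\<integral>\<^sup>+ z. indicator cyl z * ennreal (G z) \<partial>(lborel \<Otimes>\<^sub>M lborel))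
      \<le> (\<integral>\<^sup>+ z. indicator \<Omega> z * ennreal (G z) \<partial>(lborel \<Otimes>\<^sub>M lborel))"
    by (intro nn_integral_mono) (auto split: split_indicator)
  ultimately have "ennreal (1 / (\<omega> * l ^ (n + 1))) * (\<integral>\<^sup>+ z. indicator cyl z * ennreal (G z) \<partial>(lborel \<Otimes>\<^sub>M lborel))
      \<le> ennreal (B * (1 / d)) * (\<integral>\<^sup>+ z. indicator \<Omega> z * ennreal (G z) \<partial>(lborel \<Otimes>\<^sub>M lborel))"
    by (intro mult_mono ennreal_leI) auto
  also have "\<dots> = ennreal B * Whitney_avg c0 c1 G w"
  proof -
    have "ennreal (B * (1 / d)) = ennreal B * ennreal (1 / d)"
      using \<open>0 \<le> B\<close> \<open>0 < d\<close> by (intro ennreal_mult) auto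
    then show ?thesis
      by (simp only: avg mult_ac)
  qed
  finally show ?thesis
    by (simp add: n_def \<omega>_def B_def cyl_def)
qed

lemma nn_integral_cylinder_inverse_snd:
  fixes y :: "'a::euclidean_space"
  assumes "1 < a" "0 < l" "0 \<le> \<rho>"
  shows "ennreal (unit_ball_vol DIM('a) * \<rho> ^ DIM('a) * (a - 1) / a)
    \<le> (\<integral>\<^sup>+ w. indicator (ball y \<rho> \<times> {l..<a * l}) w * ennreal (1 / snd w) \<partial>(lborel \<Otimes>\<^sub>M lborel))"
proof -
  define cyl where "cyl = ball y \<rho> \<times> {l..<a * l}"
  have cyl_sets: "cyl \<in> sets (lborel \<Otimes>\<^sub>M lborel)"
    unfolding cyl_def by (intro pair_measureI) auto
  have "unit_ball_vol DIM('a) * \<rho> ^ DIM('a) * (a - 1) / a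
      = 1 / (a * l) * (unit_ball_vol DIM('a) * \<rho> ^ DIM('a) * (a * l - l))"
    using assms by (simp add: field_simps)
  then have "ennreal (unit_ball_vol DIM('a) * \<rho> ^ DIM('a) * (a - 1) / a)
      = ennreal (1 / (a * l)) * emeasure (lborel \<Otimes>\<^sub>M lborel) cyl"
    using assms by (simp add: cyl_def emeasure_cylinder ennreal_mult[symmetric])
  also have "\<dots> = (\<integral>\<^sup>+ w. ennreal (1 / (a * l)) * indicator cyl w \<partial>(lborel \<Otimes>\<^sub>M lborel))"
    by (rule nn_integral_cmult_indicator[OF cyl_sets, symmetric])
  also have "\<dots> \<le> (\<integral>\<^sup>+ w. indicator cyl w * ennreal (1 / snd w) \<partial>(lborel \<Otimes>\<^sub>M lborel))"
    using assms
    by (intro nn_integral_mono) (auto simp: cyl_def split: split_indicator intro!: ennreal_leI divide_left_mono)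
  finally show ?thesis
    by (simp add: cyl_def)
qed

lemma nn_integral_indicator_mult_ge:
  assumes [measurable]: "S \<in> sets M" "\<phi> \<in> borel_measurable M"
    and "\<And>w. w \<in> S \<Longrightarrow> c \<le> H w"
  shows "c * (\<integral>\<^sup>+ w. indicator S w * \<phi> w \<partial>M) \<le> (\<integral>\<^sup>+ w. indicator S w * H w * \<phi> w \<partial>M)"
proof -
  have "c * (\<integral>\<^sup>+ w. indicator S w * \<phi> w \<partial>M) = (\<integral>\<^sup>+ w. c * (indicator S w * \<phi> w) \<partial>M)"
    by (intro nn_integral_cmult[symmetric]) measurable
  also have "\<dots> \<le> (\<integral>\<^sup>+ w. indicator S w * H w * \<phi> w \<partial>M)"
    using assms(3) by (intro nn_integral_mono) (auto split: split_indicator intro: mult_right_mono)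
  finally show ?thesis .
qed

lemma cylinder_average_power_le:
  fixes y :: "'a::euclidean_space"
  assumes "0 < c0" "1 < a" "a \<le> c1" "0 < l" "0 < r"
    and [measurable]: "G \<in> borel_measurable (lborel \<Otimes>\<^sub>M lborel)"
  shows "epow (ennreal (1 / (unit_ball_vol DIM('a) * l ^ (DIM('a) + 1))) *
        (\<integral>\<^sup>+ z. indicator (ball y (l * (c0 / 2)) \<times> {l..<a * l}) z * ennreal (G z) \<partial>(lborel \<Otimes>\<^sub>M lborel))) r
    \<le> ennreal ((c0 ^ DIM('a) * a ^ (DIM('a) + 1) * (c1 - 1 / c1)) powr r * a / (a - 1)
          / (unit_ball_vol DIM('a) * (l * (c0 / 2)) ^ DIM('a))) *
      (\<integral>\<^sup>+ w. indicator (ball y (l * (c0 / 2)) \<times> {l..<a * l}) w * epow (Whitney_avg c0 c1 G w) r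
          * ennreal (1 / snd w) \<partial>(lborel \<Otimes>\<^sub>M lborel))"
proof -
  define n where "n = DIM('a)"
  define B where "B = c0 ^ n * a ^ (n + 1) * (c1 - 1 / c1)"
  define V where "V = unit_ball_vol n * (l * (c0 / 2)) ^ n"
  define cyl where "cyl = ball y (l * (c0 / 2)) \<times> {l..<a * l}"
  define c where "c = epow (ennreal (1 / (unit_ball_vol n * l ^ (n + 1))) *
      (\<integral>\<^sup>+ z. indicator cyl z * ennreal (G z) \<partial>(lborel \<Otimes>\<^sub>M lborel))) r"
  define J where "J = (\<integral>\<^sup>+ w. indicator cyl w * epow (Whitney_avg c0 c1 G w) r * ennreal (1 / snd w) \<partial>(lborel \<Otimes>\<^sub>M lborel))"
  have cyl_sets [measurable]: "cyl \<in> sets (lborel \<Otimes>\<^sub>M lborel)"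
    unfolding cyl_def by (intro pair_measureI) auto
  have "1 / c1 < 1"
    using assms(2,3) by simp
  then have "0 \<le> c1 - 1 / c1"
    using assms(2,3) by linarith
  then have "0 \<le> B"
    using assms(1-3) by (simp add: B_def)
  have "0 < V"
    using assms(1,4) by (simp add: V_def)
  have pt: "c \<le> ennreal (B powr r) * epow (Whitney_avg c0 c1 G w) r" if "w \<in> cyl" for w
  proof -
    have "ennreal (1 / (unit_ball_vol n * l ^ (n + 1))) *
        (\<integral>\<^sup>+ z. indicator cyl z * ennreal (G z) \<partial>(lborel \<Otimes>\<^sub>M lborel)) \<le> ennreal B * Whitney_avg c0 c1 G w"
      unfolding B_def n_def cyl_def
      using assms(1-4) that[unfolded cyl_def] by (rule cylinder_average_le_Whitney_avg)
    then have "c \<le> epow (ennreal B * Whitney_avg c0 c1 G w) r"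
      unfolding c_def using assms(5) by (intro epow_mono) auto
    also have "\<dots> = ennreal (B powr r) * epow (Whitney_avg c0 c1 G w) r"
      using \<open>0 \<le> B\<close> \<open>0 < r\<close> by (rule epow_mult_ennreal)
    finally show ?thesis .
  qed
  have "c * (\<integral>\<^sup>+ w. indicator cyl w * ennreal (1 / snd w) \<partial>(lborel \<Otimes>\<^sub>M lborel))
      \<le> (\<integral>\<^sup>+ w. indicator cyl w * (ennreal (B powr r) * epow (Whitney_avg c0 c1 G w) r)
            * ennreal (1 / snd w) \<partial>(lborel \<Otimes>\<^sub>M lborel))"
    by (rule nn_integral_indicator_mult_ge[OF cyl_sets _ pt]) measurable
  also have "\<dots> = ennreal (B powr r) * J"
    unfolding J_def by (subst nn_integral_cmult[symmetric]) (measurable, simp add: mult_ac)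
  finally have "c * (\<integral>\<^sup>+ w. indicator cyl w * ennreal (1 / snd w) \<partial>(lborel \<Otimes>\<^sub>M lborel))
      \<le> ennreal (B powr r) * J" .
  moreover have "ennreal (V * (a - 1) / a) \<le> (\<integral>\<^sup>+ w. indicator cyl w * ennreal (1 / snd w) \<partial>(lborel \<Otimes>\<^sub>M lborel))"
    unfolding V_def cyl_def n_def using assms by (intro nn_integral_cylinder_inverse_snd) auto
  ultimately have "c * ennreal (V * (a - 1) / a) \<le> ennreal (B powr r) * J"
    by (meson mult_left_mono order_trans zero_le)
  then have "c \<le> ennreal (1 / (V * (a - 1) / a)) * (ennreal (B powr r) * J)"
    using \<open>0 < V\<close> assms(2) by (intro le_ennreal_inverse_mult) auto
  also have "\<dots> = ennreal (B powr r * a / (a - 1) / V) * J"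
    using \<open>0 < V\<close> assms(2) by (simp add: ennreal_mult[symmetric] mult.assoc field_simps)
  finally show ?thesis
    by (simp add: c_def J_def B_def V_def cyl_def n_def)
qed

lemma Vol_eq:
  "Vol (y :: 'a::euclidean_space) t = (if t \<le> 0 then 0 else unit_ball_vol DIM('a) * t ^ DIM('a))"
  by (simp add: Vol_def content_ball)

lemma Vol_measurable [measurable]:
  "(\<lambda>w. Vol (fst w) (snd w)) \<in> borel_measurable ((lborel :: 'a::euclidean_space measure) \<Otimes>\<^sub>M lborel)"
  unfolding Vol_eq by measurable

lemma cone_integral_le_layer_sum:
  fixes G :: "'a::euclidean_space \<times> real \<Rightarrow> real"
  assumes "1 < a" "\<And>w. 0 \<le> G w" and [measurable]: "G \<in> borel_measurable (lborel \<Otimes>\<^sub>M lborel)"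
  shows "(\<integral>\<^sup>+ w. indicator (cone x) w * ennreal (G w / Vol (fst w) (snd w) / snd w) \<partial>(lborel \<Otimes>\<^sub>M lborel))
    \<le> (\<Sum>m. ennreal (1 / (unit_ball_vol DIM('a) * layer_base a m ^ (DIM('a) + 1))) *
         (\<integral>\<^sup>+ z. indicator (ball x (a * layer_base a m) \<times> layer a m) z * ennreal (G z) \<partial>(lborel \<Otimes>\<^sub>M lborel)))"
proof -
  define n where "n = DIM('a)"
  define \<omega> where "\<omega> = unit_ball_vol n"
  define g where "g m z = ennreal (1 / (\<omega> * layer_base a m ^ (n + 1))) *
      (indicator (ball x (a * layer_base a m) \<times> layer a m) z * ennreal (G z))" for m z
  have cyl_sets [measurable]: "ball x (a * layer_base a m) \<times> layer a m \<in> sets (lborel \<Otimes>\<^sub>M lborel)" for m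
    by (intro pair_measureI) auto
  have "indicator (cone x) w * ennreal (G w / Vol (fst w) (snd w) / snd w) \<le> (\<Sum>m. g m w)" for w
  proof (cases "w \<in> cone x")
    case True
    obtain y t where w: "w = (y, t)"
      by (cases w)
    with True have "dist x y < t"
      by (simp add: cone_def)
    then have "0 < t"
      using zero_le_dist[of x y] by linarith
    then obtain m where m: "t \<in> layer a m"
      using layer_exists[OF assms(1)] by blast
    define l where "l = layer_base a m"
    have "0 < l" "l \<le> t"
      using m layer_base_pos[OF assms(1)] by (auto simp: layer_def l_def)
    have "0 < \<omega>"
      by (simp add: \<omega>_def)
    have "G w / Vol y t / t = G w / (\<omega> * t ^ (n + 1))"
      using \<open>0 < t\<close> by (simp add: Vol_eq \<omega>_def n_def field_simps)
    also have "\<dots> \<le> G w / (\<omega> * l ^ (n + 1))"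
      using assms(2)[of w] \<open>0 < \<omega>\<close> \<open>0 < l\<close> \<open>l \<le> t\<close>
      by (intro divide_left_mono mult_left_mono power_mono mult_pos_pos) auto
    finally have "ennreal (G w / Vol y t / t) \<le> g m w"
      using \<open>dist x y < t\<close> m \<open>0 < \<omega>\<close> \<open>0 < l\<close> assms(2)[of w]
      by (auto simp: g_def w l_def layer_def ennreal_mult[symmetric] intro: ennreal_leI)
    also have "\<dots> \<le> (\<Sum>m. g m w)"
      using sum_le_suminf[OF summableI, of "{m}" "\<lambda>i. g i w"] by simp
    finally show ?thesis
      using True by (simp add: w)
  qed simp
  then have "(\<integral>\<^sup>+ w. indicator (cone x) w * ennreal (G w / Vol (fst w) (snd w) / snd w) \<partial>(lborel \<Otimes>\<^sub>M lborel))
      \<le> (\<integral>\<^sup>+ w. (\<Sum>m. g m w) \<partial>(lborel \<Otimes>\<^sub>M lborel))"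
    by (rule nn_integral_mono)
  also have "\<dots> = (\<Sum>m. \<integral>\<^sup>+ w. g m w \<partial>(lborel \<Otimes>\<^sub>M lborel))"
    by (rule nn_integral_suminf) (simp add: g_def)
  also have "\<dots> = (\<Sum>m. ennreal (1 / (\<omega> * layer_base a m ^ (n + 1))) *
         (\<integral>\<^sup>+ z. indicator (ball x (a * layer_base a m) \<times> layer a m) z * ennreal (G z) \<partial>(lborel \<Otimes>\<^sub>M lborel)))"
    unfolding g_def by (intro suminf_cong nn_integral_cmult) measurable
  finally show ?thesis
    by (simp add: \<omega>_def n_def)
qed

lemma cone_integral_power_le_cylinder_sum:
  fixes G :: "'a::euclidean_space \<times> real \<Rightarrow> real" and P :: "'a set"
  assumes "0 < c0" "1 < c1" "finite P" "cball 0 (sqrt c1) \<subseteq> (\<Union>v\<in>P. ball v (c0 / 2))"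
    and "0 < r" "r \<le> 1" "\<And>w. 0 \<le> G w" and [measurable]: "G \<in> borel_measurable (lborel \<Otimes>\<^sub>M lborel)"
  shows "epow (\<integral>\<^sup>+ w. indicator (cone x) w * ennreal (G w / Vol (fst w) (snd w) / snd w) \<partial>(lborel \<Otimes>\<^sub>M lborel)) r
    \<le> (\<Sum>m. \<Sum>v\<in>P. ennreal ((c0 ^ DIM('a) * sqrt c1 ^ (DIM('a) + 1) * (c1 - 1 / c1)) powr r
            * sqrt c1 / (sqrt c1 - 1) / (unit_ball_vol DIM('a) * (layer_base (sqrt c1) m * (c0 / 2)) ^ DIM('a))) *
        (\<integral>\<^sup>+ w. indicator (ball (x + layer_base (sqrt c1) m *\<^sub>R v) (layer_base (sqrt c1) m * (c0 / 2))
              \<times> layer (sqrt c1) m) w * epow (Whitney_avg c0 c1 G w) r * ennreal (1 / snd w) \<partial>(lborel \<Otimes>\<^sub>M lborel)))"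
    (is "_ \<le> (\<Sum>m. \<Sum>v\<in>P. ?T m v)")
proof -
  define a where "a = sqrt c1"
  define n where "n = DIM('a)"
  define l where "l m = layer_base a m" for m
  define c where "c m = ennreal (1 / (unit_ball_vol n * l m ^ (n + 1)))" for m
  define cyl where "cyl m v = ball (x + l m *\<^sub>R v) (l m * (c0 / 2)) \<times> layer a m" for m v
  have a: "1 < a" "a \<le> c1"
    using assms(2) real_sqrt_le_iff[of c1 "c1 ^ 2"] by (auto simp: a_def power2_eq_square)
  have "0 < l m" for m
    using a by (simp add: l_def layer_base_pos)
  have cyl_sets [measurable]: "cyl m v \<in> sets (lborel \<Otimes>\<^sub>M lborel)" for m v
    unfolding cyl_def by (intro pair_measureI) auto
  have layer_sum: "epow (c m * (\<integral>\<^sup>+ z. indicator (ball x (a * l m) \<times> layer a m) z * ennreal (G z) \<partial>(lborel \<Otimes>\<^sub>M lborel))) r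
      \<le> (\<Sum>v\<in>P. ?T m v)" for m
  proof -
    have "ball x (l m * a) \<times> layer a m \<subseteq> (\<Union>v\<in>P. cyl m v)"
      using ball_subset_scaled_cover[OF assms(4)[folded a_def] \<open>0 < l m\<close>, of x] by (auto simp: cyl_def)
    then have "(\<integral>\<^sup>+ z. indicator (ball x (a * l m) \<times> layer a m) z * ennreal (G z) \<partial>(lborel \<Otimes>\<^sub>M lborel))
        \<le> (\<Sum>v\<in>P. \<integral>\<^sup>+ z. indicator (cyl m v) z * ennreal (G z) \<partial>(lborel \<Otimes>\<^sub>M lborel))"
      by (intro nn_integral_indicator_le_sum_cover assms(3) cyl_sets) (auto simp: mult.commute)
    then have "epow (c m * (\<integral>\<^sup>+ z. indicator (ball x (a * l m) \<times> layer a m) z * ennreal (G z) \<partial>(lborel \<Otimes>\<^sub>M lborel))) r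
        \<le> epow (\<Sum>v\<in>P. c m * (\<integral>\<^sup>+ z. indicator (cyl m v) z * ennreal (G z) \<partial>(lborel \<Otimes>\<^sub>M lborel))) r"
      unfolding sum_distrib_left[symmetric] using assms(5) by (intro epow_mono mult_left_mono) auto
    also have "\<dots> \<le> (\<Sum>v\<in>P. epow (c m * (\<integral>\<^sup>+ z. indicator (cyl m v) z * ennreal (G z) \<partial>(lborel \<Otimes>\<^sub>M lborel))) r)"
      using assms(5,6) by (rule epow_sum_le)
    also have "\<dots> \<le> (\<Sum>v\<in>P. ?T m v)"
      unfolding c_def cyl_def layer_def l_def n_def a_def
      using assms(1,5) a \<open>0 < l m\<close>
      by (intro sum_mono cylinder_average_power_le) (auto simp: a_def l_def)
    finally show ?thesis .
  qed
  have "epow (\<integral>\<^sup>+ w. indicator (cone x) w * ennreal (G w / Vol (fst w) (snd w) / snd w) \<partial>(lborel \<Otimes>\<^sub>M lborel)) r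
      \<le> epow (\<Sum>m. c m * (\<integral>\<^sup>+ z. indicator (ball x (a * l m) \<times> layer a m) z * ennreal (G z) \<partial>(lborel \<Otimes>\<^sub>M lborel))) r"
    unfolding c_def l_def n_def using a assms(5,7)
    by (intro epow_mono cone_integral_le_layer_sum) auto
  also have "\<dots> \<le> (\<Sum>m. epow (c m * (\<integral>\<^sup>+ z. indicator (ball x (a * l m) \<times> layer a m) z * ennreal (G z) \<partial>(lborel \<Otimes>\<^sub>M lborel))) r)"
    using assms(5,6) by (rule epow_suminf_le)
  also have "\<dots> \<le> (\<Sum>m. \<Sum>v\<in>P. ?T m v)"
    by (intro suminf_le summableI layer_sum)
  finally show ?thesis .
qed

lemma tent_integral_le_Whitney_integral:
  fixes G :: "'a::euclidean_space \<times> real \<Rightarrow> real" and P :: "'a set"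
  assumes "0 < c0" "1 < c1" "finite P" "cball 0 (sqrt c1) \<subseteq> (\<Union>v\<in>P. ball v (c0 / 2))"
    and "0 < r" "r \<le> 1" "\<And>w. 0 \<le> G w" and [measurable]: "G \<in> borel_measurable (lborel \<Otimes>\<^sub>M lborel)"
  shows "(\<integral>\<^sup>+ x. epow (\<integral>\<^sup>+ w. indicator (cone x) w * ennreal (G w / Vol (fst w) (snd w) / snd w)
        \<partial>(lborel \<Otimes>\<^sub>M lborel)) r \<partial>lborel)
    \<le> ennreal (real (card P) * ((c0 ^ DIM('a) * sqrt c1 ^ (DIM('a) + 1) * (c1 - 1 / c1)) powr r
          * sqrt c1 / (sqrt c1 - 1))) *
      (\<integral>\<^sup>+ w. indicator {w. 0 < snd w} w * epow (Whitney_avg c0 c1 G w) r * ennreal (1 / snd w)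
        \<partial>(lborel \<Otimes>\<^sub>M lborel))"
proof -
  define a where "a = sqrt c1"
  define n where "n = DIM('a)"
  define l where "l m = layer_base a m" for m
  define K where "K = (c0 ^ n * a ^ (n + 1) * (c1 - 1 / c1)) powr r * a / (a - 1)"
  define V where "V m = unit_ball_vol n * (l m * (c0 / 2)) ^ n" for m
  define F where "F m w = indicator (layer a m) (snd w) * epow (Whitney_avg c0 c1 G w) r * ennreal (1 / snd w)" for m w
  define T where "T m v x = ennreal (K / V m) *
      (\<integral>\<^sup>+ w. indicator (ball (x + l m *\<^sub>R v) (l m * (c0 / 2))) (fst w) * F m w \<partial>(lborel \<Otimes>\<^sub>M lborel))" for m v x
  have "1 < a"
    using assms(2) by (simp add: a_def)
  then have "0 < l m" "0 < V m" for m
    using assms(1) by (simp_all add: l_def V_def n_def layer_base_pos)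
  have "0 \<le> K"
    using \<open>1 < a\<close> by (simp add: K_def)
  have F_measurable [measurable]: "F m \<in> borel_measurable (lborel \<Otimes>\<^sub>M lborel)" for m
    unfolding F_def by measurable
  have T_measurable [measurable]: "T m v \<in> borel_measurable lborel" for m v
    unfolding T_def
    by (intro borel_measurable_times_ennreal measurable_const
        nn_integral_ball_translate_measurable[OF sigma_finite_lborel F_measurable]) simp
  have T_integral: "(\<integral>\<^sup>+ x. T m v x \<partial>lborel) = ennreal K * (\<integral>\<^sup>+ w. F m w \<partial>(lborel \<Otimes>\<^sub>M lborel))" for m v
  proof -
    have "(\<integral>\<^sup>+ x. T m v x \<partial>lborel) = ennreal (K / V m) * ennreal (V m) * (\<integral>\<^sup>+ w. F m w \<partial>(lborel \<Otimes>\<^sub>M lborel))"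
      unfolding T_def using \<open>0 < l m\<close> assms(1)
      by (simp add: nn_integral_cmult nn_integral_ball_translate sigma_finite_lborel V_def n_def mult.assoc)
    also have "ennreal (K / V m) * ennreal (V m) = ennreal K"
      using \<open>0 \<le> K\<close> \<open>0 < V m\<close> by (simp add: ennreal_mult[symmetric])
    finally show ?thesis .
  qed
  have "(\<integral>\<^sup>+ x. epow (\<integral>\<^sup>+ w. indicator (cone x) w * ennreal (G w / Vol (fst w) (snd w) / snd w)
        \<partial>(lborel \<Otimes>\<^sub>M lborel)) r \<partial>lborel) \<le> (\<integral>\<^sup>+ x. (\<Sum>m. \<Sum>v\<in>P. T m v x) \<partial>lborel)"
    using cone_integral_power_le_cylinder_sum[OF assms]
    by (intro nn_integral_mono)
       (simp add: T_def F_def K_def V_def l_def n_def a_def layer_def indicator_times mult_ac)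
  also have "\<dots> = (\<Sum>m. \<integral>\<^sup>+ x. (\<Sum>v\<in>P. T m v x) \<partial>lborel)"
    by (rule nn_integral_suminf) measurable
  also have "\<dots> = (\<Sum>m. \<Sum>v\<in>P. \<integral>\<^sup>+ x. T m v x \<partial>lborel)"
    by (intro suminf_cong nn_integral_sum) measurable
  also have "\<dots> = ennreal (real (card P) * K) * (\<Sum>m. \<integral>\<^sup>+ w. F m w \<partial>(lborel \<Otimes>\<^sub>M lborel))"
    using \<open>0 \<le> K\<close> by (simp add: T_integral ennreal_mult ennreal_of_nat_eq_real_of_nat mult.assoc)
  also have "(\<Sum>m. \<integral>\<^sup>+ w. F m w \<partial>(lborel \<Otimes>\<^sub>M lborel)) = (\<integral>\<^sup>+ w. (\<Sum>m. F m w) \<partial>(lborel \<Otimes>\<^sub>M lborel))"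
    by (rule nn_integral_suminf[symmetric]) measurable
  also have "\<dots> = (\<integral>\<^sup>+ w. indicator {w. 0 < snd w} w * epow (Whitney_avg c0 c1 G w) r * ennreal (1 / snd w)
        \<partial>(lborel \<Otimes>\<^sub>M lborel))"
    unfolding F_def using suminf_indicator_layer[OF \<open>1 < a\<close>]
    by (simp add: indicator_def)
  finally show ?thesis
    by (simp add: K_def a_def n_def)
qed

lemma finite_ball_cover_cball:
  fixes R \<delta> :: real
  assumes "0 < \<delta>"
  obtains P :: "'a::euclidean_space set" where "finite P" "cball 0 R \<subseteq> (\<Union>v\<in>P. ball v \<delta>)"
proof -
  have "cball (0::'a) R \<subseteq> (\<Union>v\<in>cball 0 R. ball v \<delta>)"
    using assms by auto
  then show ?thesis
    using compactE_image[OF compact_cball, of "cball 0 R" "\<lambda>v. ball v \<delta>"] that by blast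
qed

theorem mainTheorem17:
  fixes p q s c0 c1 :: real
  assumes "0 < q" and "0 < p" and "p \<le> q" and "0 < c0" and "1 < c1"
  shows "\<exists>C::real. 0 \<le> C \<and>
    (\<forall>f :: 'a::euclidean_space \<times> real \<Rightarrow> real. f \<in> borel_measurable (lborel \<Otimes>\<^sub>M lborel) \<longrightarrow>
        T_norm p q s f \<le> ennreal C * Z_norm p q s c0 c1 f)"
proof -
  obtain P :: "'a set" where P: "finite P" "cball 0 (sqrt c1) \<subseteq> (\<Union>v\<in>P. ball v (c0 / 2))"
    using finite_ball_cover_cball[of "c0 / 2"] assms(4) by auto
  define r where "r = p / q"
  have r: "0 < r" "r \<le> 1"
    using assms(1-3) by (auto simp: r_def)
  define K where "K = real (card P) * ((c0 ^ DIM('a) * sqrt c1 ^ (DIM('a) + 1) * (c1 - 1 / c1)) powr r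
      * sqrt c1 / (sqrt c1 - 1))"
  have "0 \<le> K"
    using assms(5) by (simp add: K_def)
  show ?thesis
  proof (intro exI[of _ "K powr (1 / p)"] conjI allI impI)
    fix f :: "'a \<times> real \<Rightarrow> real"
    assume [measurable]: "f \<in> borel_measurable (lborel \<Otimes>\<^sub>M lborel)"
    define G where "G w = \<bar>Vpow (- s) f w\<bar> powr q" for w
    have G: "G \<in> borel_measurable (lborel \<Otimes>\<^sub>M lborel)" "\<And>w. 0 \<le> G w"
      unfolding G_def[abs_def] Vpow_def case_prod_beta' by measurable
    have "T_norm p q s f = epow (\<integral>\<^sup>+ x. epow (\<integral>\<^sup>+ w. indicator (cone x) w *
        ennreal (G w / Vol (fst w) (snd w) / snd w) \<partial>(lborel \<Otimes>\<^sub>M lborel)) r \<partial>lborel) (1 / p)"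
      using assms(1) by (simp add: T_norm_def Aq_def G_def case_prod_beta' epow_epow r_def)
    also have "\<dots> \<le> epow (ennreal K * (\<integral>\<^sup>+ w. indicator {w. 0 < snd w} w *
        epow (Whitney_avg c0 c1 G w) r * ennreal (1 / snd w) \<partial>(lborel \<Otimes>\<^sub>M lborel))) (1 / p)"
      unfolding K_def using assms(2,4,5) P r G
      by (intro epow_mono tent_integral_le_Whitney_integral) auto
    also have "\<dots> = ennreal (K powr (1 / p)) * Z_norm p q s c0 c1 f"
      using assms(1,2) \<open>0 \<le> K\<close>
      by (simp add: epow_mult_ennreal Z_norm_def Wq_eq_Whitney_avg epow_epow r_def G_def[abs_def]
          case_prod_beta' indicator_def)
    finally show "T_norm p q s f \<le> ennreal (K powr (1 / p)) * Z_norm p q s c0 c1 f" .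
  qed simp
qed

end
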